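(* Let $\mu,\nu$ be atomless, compactly supported probability measures on $\mathbb{R}$. A transport plan $\gamma\in\Pi(\mu,\nu)$ is optimal for the problem $\min_{\gamma\in\Pi(\mu,\nu)}\int|y-x|\,d\gamma(x,y)$ if and only if, for $\gamma$-a.e. $(x,y)\in\mathbb{R}^2$: (a) if $x\in A$, then $y=x$; (b) if $x\in A^+$, then $y\ge x$ and $y$ belongs to the same connected component of $A^+$ as $x$; (c) if $x\in A^-$, then $y\le x$ and $y$ belongs to the same connected component of $A^-$ as $x$.
   Context: $F_\rho(x)=\rho((-\infty,x])$ is the cumulative distribution function. $A=\{x: F_\mu(x)=F_\nu(x)\}$ (closed), $A^+=\{x: F_\mu(x)>F_\nu(x)\}$ and $A^-=\{x:F_\mu(x)<F_\nu(x)\}$ (open). $\Pi(\mu,\nu)$ is the set of probability measures on $\mathbb{R}^2$ with first marginal $\mu$ and second marginal $\nu$. *)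

theory Defs
  imports "HOL-Probability.Probability"
begin

definition borel_prob :: "real measure \<Rightarrow> bool" where
  "borel_prob \<rho> \<longleftrightarrow> prob_space \<rho> \<and> sets \<rho> = sets borel"

definition atomless :: "real measure \<Rightarrow> bool" where
  "atomless \<rho> \<longleftrightarrow> (\<forall>x. emeasure \<rho> {x} = 0)"

definition compactly_supported :: "real measure \<Rightarrow> bool" where
  "compactly_supported \<rho> \<longleftrightarrow> (\<exists>K. compact K \<and> emeasure \<rho> (UNIV - K) = 0)"

definition transport_plans :: "real measure \<Rightarrow> real measure \<Rightarrow> (real \<times> real) measure set" where
  "transport_plans \<mu> \<nu> = {\<gamma>. prob_space \<gamma> \<and> sets \<gamma> = sets (borel \<Otimes>\<^sub>M borel)
       \<and> distr \<gamma> borel fst = \<mu> \<and> distr \<gamma> borel snd = \<nu>}"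

definition transport_cost :: "(real \<times> real) measure \<Rightarrow> ennreal" where
  "transport_cost \<gamma> = (\<integral>\<^sup>+ p. ennreal \<bar>snd p - fst p\<bar> \<partial>\<gamma>)"

definition optimal_plan :: "real measure \<Rightarrow> real measure \<Rightarrow> (real \<times> real) measure \<Rightarrow> bool" where
  "optimal_plan \<mu> \<nu> \<gamma> \<longleftrightarrow> \<gamma> \<in> transport_plans \<mu> \<nu> \<and>
     (\<forall>\<gamma>'\<in>transport_plans \<mu> \<nu>. transport_cost \<gamma> \<le> transport_cost \<gamma>')"

definition eqset :: "real measure \<Rightarrow> real measure \<Rightarrow> real set" where
  "eqset \<mu> \<nu> = {x. cdf \<mu> x = cdf \<nu> x}"
definition posset :: "real measure \<Rightarrow> real measure \<Rightarrow> real set" where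
  "posset \<mu> \<nu> = {x. cdf \<mu> x > cdf \<nu> x}"
definition negset :: "real measure \<Rightarrow> real measure \<Rightarrow> real set" where
  "negset \<mu> \<nu> = {x. cdf \<mu> x < cdf \<nu> x}"

end

theory Submission
  imports Defs
begin

text \<open>For a plan \<open>\<gamma>\<close> let \<open>U(t)\<close> and \<open>D(t)\<close> (\<open>up_flux\<close>, \<open>down_flux\<close>) be the \<open>\<gamma>\<close>-mass of
  pairs crossing the point \<open>t\<close> upwards (\<open>x \<le> t < y\<close>) and downwards (\<open>y \<le> t < x\<close>). Then
  \<open>F\<^sub>\<mu> - F\<^sub>\<nu> = U - D\<close>, and by Fubini the cost of \<open>\<gamma>\<close> is \<open>\<integral>(U + D) dt \<ge> \<integral>|F\<^sub>\<mu> - F\<^sub>\<nu>| dt\<close>.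
  The quantile coupling has \<open>U D = 0\<close> everywhere, so it attains this bound, which is finite for
  compactly supported marginals. Hence \<open>\<gamma>\<close> is optimal iff \<open>U D = 0\<close> almost everywhere, and by a
  second use of Fubini iff \<open>U D = 0\<close> everywhere (\<open>one_way_flux\<close>). As \<open>F\<^sub>\<mu> - F\<^sub>\<nu>\<close> is continuous
  for atomless marginals, the latter says that almost every pair moves only across points where
  \<open>F\<^sub>\<mu> - F\<^sub>\<nu>\<close> has the sign of its displacement, i.e. within one component of \<open>A\<^sup>+\<close> (upwards)
  or of \<open>A\<^sup>-\<close> (downwards).\<close>

section \<open>Monotone displacements on the real line\<close>

lemma connected_component_real_iff:
  fixes S :: "real set"
  shows "y \<in> connected_component_set S x \<longleftrightarrow> closed_segment x y \<subseteq> S"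
proof
  assume y: "y \<in> connected_component_set S x"
  then have "x \<in> connected_component_set S x"
    using connected_component_eq_empty connected_component_refl_eq by blast
  moreover have "convex (connected_component_set S x)"
    using connected_connected_component is_interval_connected_1 is_interval_convex_1 by blast
  ultimately have "closed_segment x y \<subseteq> connected_component_set S x"
    using y by (simp add: closed_segment_subset)
  then show "closed_segment x y \<subseteq> S"
    using connected_component_subset by blast
next
  assume "closed_segment x y \<subseteq> S"
  then have "closed_segment x y \<subseteq> connected_component_set S x"
    by (intro connected_component_maximal) auto
  then show "y \<in> connected_component_set S x" by auto
qed

lemma displacement_within_component_iff:
  fixes F G :: "real \<Rightarrow> real"
  shows "((x \<in> {t. F t = G t} \<longrightarrow> y = x) \<and>
          (x \<in> {t. F t > G t} \<longrightarrow> y \<ge> x \<and> y \<in> connected_component_set {t. F t > G t} x) \<and>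
          (x \<in> {t. F t < G t} \<longrightarrow> y \<le> x \<and> y \<in> connected_component_set {t. F t < G t} x))
     \<longleftrightarrow> (x < y \<longrightarrow> (\<forall>t\<in>{x..y}. G t < F t)) \<and> (y < x \<longrightarrow> (\<forall>t\<in>{y..x}. F t < G t))"
    (is "?lhs \<longleftrightarrow> _")
proof (cases x y rule: linorder_cases)
  case less
  then have "?lhs \<longleftrightarrow> y \<in> connected_component_set {t. F t > G t} x"
    by (auto dest: connected_component_in)
  also have "\<dots> \<longleftrightarrow> (\<forall>t\<in>{x..y}. G t < F t)"
    unfolding connected_component_real_iff closed_segment_eq_real_ivl using less by auto
  finally show ?thesis using less by simp
next
  case greater
  then have "?lhs \<longleftrightarrow> y \<in> connected_component_set {t. F t < G t} x"
    by (auto dest: connected_component_in)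
  also have "\<dots> \<longleftrightarrow> (\<forall>t\<in>{y..x}. F t < G t)"
    unfolding connected_component_real_iff closed_segment_eq_real_ivl using greater by auto
  finally show ?thesis using greater by simp
qed (auto simp: connected_component_refl)

lemma closed_countable_subset_meets_intervals:
  fixes K :: "real set"
  assumes "closed K"
  obtains N where "N \<subseteq> K" "countable N"
    "\<And>a b t. a < b \<Longrightarrow> t \<in> K \<Longrightarrow> t \<in> {a..b} \<Longrightarrow> \<exists>n\<in>N. n \<in> {a..b}"
proof
  let ?Q = "\<rat> \<times> (\<rat> :: real set)"
  define N where "N = K \<inter> ((\<lambda>(r, s). Inf (K \<inter> {r..s})) ` ?Q \<union> (\<lambda>(r, s). Sup (K \<inter> {r..s})) ` ?Q)"
  show "N \<subseteq> K" by (simp add: N_def)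
  show "countable N"
    unfolding N_def using countable_rat by (intro countable_Int2 countable_Un countable_image) auto
  fix a b t :: real
  assume "a < b" "t \<in> K" "t \<in> {a..b}"
  have closed: "closed (K \<inter> {r..s})" for r s
    using \<open>closed K\<close> by (intro closed_Int) auto
  show "\<exists>n\<in>N. n \<in> {a..b}"
  proof (cases "a < t")
    case True
    obtain r where r: "r \<in> \<rat>" "a < r" "r < t" using Rats_dense_in_real[OF True] by blast
    obtain s where s: "s \<in> \<rat>" "t < s" using Rats_dense_in_real[of t "t + 1"] by auto
    let ?S = "K \<inter> {r..s}"
    have "t \<in> ?S" "bdd_below ?S" using \<open>t \<in> K\<close> r s by auto
    then have "Inf ?S \<in> ?S" "Inf ?S \<le> t"
      using closed_contains_Inf[OF _ _ closed, of r s] cInf_lower[of t ?S] by blast+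
    moreover have "Inf ?S \<in> N"
      using \<open>Inf ?S \<in> ?S\<close> r(1) s(1) unfolding N_def by (intro IntI UnI1 image_eqI[of _ _ "(r, s)"]) auto
    ultimately show ?thesis using r \<open>t \<in> {a..b}\<close> by (intro bexI[of _ "Inf ?S"]) auto
  next
    case False
    with \<open>t \<in> {a..b}\<close> have "t = a" by simp
    obtain r where r: "r \<in> \<rat>" "r < t" using Rats_dense_in_real[of "t - 1" t] by auto
    obtain s where s: "s \<in> \<rat>" "t < s" "s < b" using Rats_dense_in_real \<open>a < b\<close> \<open>t = a\<close> by blast
    let ?S = "K \<inter> {r..s}"
    have "t \<in> ?S" "bdd_above ?S" using \<open>t \<in> K\<close> r s by auto
    then have "Sup ?S \<in> ?S" "t \<le> Sup ?S"
      using closed_contains_Sup[OF _ _ closed, of r s] cSup_upper[of t ?S] by blast+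
    moreover have "Sup ?S \<in> N"
      using \<open>Sup ?S \<in> ?S\<close> r(1) s(1) unfolding N_def by (intro IntI UnI2 image_eqI[of _ _ "(r, s)"]) auto
    ultimately show ?thesis using s \<open>t = a\<close> by (intro bexI[of _ "Sup ?S"]) auto
  qed
qed

lemma AE_ex_witness: "(AE x in M. P x) \<Longrightarrow> \<not> (AE x in M. \<not> Q x) \<Longrightarrow> \<exists>x. P x \<and> Q x"
  by (metis (mono_tags, lifting) eventually_mono)

lemma AE_positive_between:
  fixes h :: "real \<Rightarrow> real" and X Y :: "'a \<Rightarrow> real"
  assumes "continuous_on UNIV h"
    and not_across: "\<And>t. h t \<le> 0 \<Longrightarrow> AE p in M. \<not> (X p \<le> t \<and> t < Y p)"
    and not_onto: "\<And>t. AE p in M. Y p \<noteq> t"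
  shows "AE p in M. X p < Y p \<longrightarrow> (\<forall>t\<in>{X p..Y p}. 0 < h t)"
proof -
  have "closed {t. h t \<le> 0}"
    using closed_Collect_le[OF assms(1) continuous_on_const] .
  then obtain N where N: "N \<subseteq> {t. h t \<le> 0}" "countable N"
    and meets: "\<And>a b t. a < b \<Longrightarrow> t \<in> {t. h t \<le> 0} \<Longrightarrow> t \<in> {a..b} \<Longrightarrow> \<exists>n\<in>N. n \<in> {a..b}"
    by (rule closed_countable_subset_meets_intervals) blast
  \<comment> \<open>a pair jumping over a zero of \<open>h\<close> jumps over, or onto, a point of \<open>N\<close>\<close>
  have "AE p in M. \<forall>n\<in>N. \<not> (X p \<le> n \<and> n < Y p) \<and> Y p \<noteq> n"
  proof (rule AE_ball_countable'[OF _ N(2)])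
    fix n assume "n \<in> N"
    then show "AE p in M. \<not> (X p \<le> n \<and> n < Y p) \<and> Y p \<noteq> n"
      using N(1) by (intro AE_conjI not_across not_onto) auto
  qed
  then show ?thesis
  proof eventually_elim
    case (elim p)
    show ?case
    proof (intro impI ballI, rule ccontr)
      fix t assume "X p < Y p" "t \<in> {X p..Y p}" "\<not> 0 < h t"
      then obtain n where "n \<in> N" "n \<in> {X p..Y p}" using meets[of "X p" "Y p" t] by auto
      then show False using elim by fastforce
    qed
  qed
qed

lemma Collect_in_sets_borel_pair [measurable]:
  "Measurable.pred (borel \<Otimes>\<^sub>M borel) P \<Longrightarrow> {p :: real \<times> real. P p} \<in> sets (borel \<Otimes>\<^sub>M borel)"
  unfolding Measurable.pred_def by (simp add: space_pair_measure)

section \<open>Crossing fluxes of a transport plan\<close>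

definition up_flux :: "(real \<times> real) measure \<Rightarrow> real \<Rightarrow> real" where
  "up_flux \<gamma> t = measure \<gamma> {p. fst p \<le> t \<and> t < snd p}"

definition down_flux :: "(real \<times> real) measure \<Rightarrow> real \<Rightarrow> real" where
  "down_flux \<gamma> t = measure \<gamma> {p. snd p \<le> t \<and> t < fst p}"

definition one_way_flux :: "(real \<times> real) measure \<Rightarrow> bool" where
  "one_way_flux \<gamma> \<longleftrightarrow> (\<forall>t. up_flux \<gamma> t = 0 \<or> down_flux \<gamma> t = 0)"

abbreviation cdf_gap :: "real measure \<Rightarrow> real measure \<Rightarrow> real \<Rightarrow> real" where
  "cdf_gap \<mu> \<nu> t \<equiv> cdf \<mu> t - cdf \<nu> t"

lemma up_flux_nonneg: "up_flux \<gamma> t \<ge> 0"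
  by (simp add: up_flux_def)

lemma down_flux_nonneg: "down_flux \<gamma> t \<ge> 0"
  by (simp add: down_flux_def)

lemma real_distribution_if_borel_prob: "borel_prob \<rho> \<Longrightarrow> real_distribution \<rho>"
  by (simp add: borel_prob_def real_distribution_def real_distribution_axioms_def)

lemma isCont_cdf_if_atomless:
  assumes "borel_prob \<rho>" "atomless \<rho>"
  shows "isCont (cdf \<rho>) x"
proof -
  interpret real_distribution \<rho> using assms(1) by (rule real_distribution_if_borel_prob)
  show ?thesis using assms(2) by (simp add: isCont_cdf atomless_def measure_def)
qed

locale coupling =
  fixes \<mu> \<nu> :: "real measure" and \<gamma> :: "(real \<times> real) measure"
  assumes borel_prob_fst: "borel_prob \<mu>" and borel_prob_snd: "borel_prob \<nu>"
    and transport_plan: "\<gamma> \<in> transport_plans \<mu> \<nu>"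
begin

lemma sets_coupling [measurable_cong]: "sets \<gamma> = sets (borel \<Otimes>\<^sub>M borel)"
  using transport_plan by (simp add: transport_plans_def)

lemma distr_fst: "distr \<gamma> borel fst = \<mu>"
  using transport_plan by (simp add: transport_plans_def)

lemma distr_snd: "distr \<gamma> borel snd = \<nu>"
  using transport_plan by (simp add: transport_plans_def)

sublocale prob_space \<gamma>
  using transport_plan by (simp add: transport_plans_def)

lemma space_coupling [simp]: "space \<gamma> = UNIV"
  using sets_eq_imp_space_eq[OF sets_coupling] by (simp add: space_pair_measure)

sublocale M: real_distribution \<mu>
  by (rule real_distribution_if_borel_prob[OF borel_prob_fst])

sublocale N: real_distribution \<nu>
  by (rule real_distribution_if_borel_prob[OF borel_prob_snd])

lemma measure_fst: "measure \<gamma> {p. fst p \<in> A} = measure \<mu> A" if "A \<in> sets borel"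
  using measure_distr[of fst \<gamma> borel A] that by (simp add: distr_fst vimage_def)

lemma measure_snd: "measure \<gamma> {p. snd p \<in> A} = measure \<nu> A" if "A \<in> sets borel"
  using measure_distr[of snd \<gamma> borel A] that by (simp add: distr_snd vimage_def)

lemma cdf_fst_eq_flux: "cdf \<mu> t = measure \<gamma> {p. fst p \<le> t \<and> snd p \<le> t} + up_flux \<gamma> t"
  unfolding cdf_def up_flux_def measure_fst[of "{..t}", symmetric, simplified]
  by (subst finite_measure_Union[symmetric]) (auto intro!: arg_cong[where f="measure \<gamma>"])

lemma cdf_snd_eq_flux: "cdf \<nu> t = measure \<gamma> {p. fst p \<le> t \<and> snd p \<le> t} + down_flux \<gamma> t"
  unfolding cdf_def down_flux_def measure_snd[of "{..t}", symmetric, simplified]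
  by (subst finite_measure_Union[symmetric]) (auto intro!: arg_cong[where f="measure \<gamma>"])

lemma cdf_gap_eq_flux: "cdf_gap \<mu> \<nu> t = up_flux \<gamma> t - down_flux \<gamma> t"
  using cdf_fst_eq_flux cdf_snd_eq_flux by simp

lemma borel_measurable_cdf [measurable]:
  "cdf \<mu> \<in> borel_measurable borel" "cdf \<nu> \<in> borel_measurable borel"
  by (auto intro!: borel_measurable_mono simp: mono_def M.cdf_nondecreasing N.cdf_nondecreasing)

lemma borel_measurable_flux [measurable]:
  "up_flux \<gamma> \<in> borel_measurable borel" "down_flux \<gamma> \<in> borel_measurable borel"
proof -
  have "mono (\<lambda>t. measure \<gamma> {p. fst p \<le> t \<and> snd p \<le> t})"
    by (auto intro!: monoI finite_measure_mono)
  then have [measurable]: "(\<lambda>t. measure \<gamma> {p. fst p \<le> t \<and> snd p \<le> t}) \<in> borel_measurable borel"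
    by (rule borel_measurable_mono)
  have "up_flux \<gamma> = (\<lambda>t. cdf \<mu> t - measure \<gamma> {p. fst p \<le> t \<and> snd p \<le> t})"
    "down_flux \<gamma> = (\<lambda>t. cdf \<nu> t - measure \<gamma> {p. fst p \<le> t \<and> snd p \<le> t})"
    by (auto simp: cdf_fst_eq_flux cdf_snd_eq_flux)
  then show "up_flux \<gamma> \<in> borel_measurable borel" "down_flux \<gamma> \<in> borel_measurable borel"
    by simp_all
qed

lemma emeasure_crossing: "emeasure \<gamma> {p. fst p \<le> t \<and> t < snd p \<or> snd p \<le> t \<and> t < fst p}
    = ennreal (up_flux \<gamma> t + down_flux \<gamma> t)"
proof -
  have "emeasure \<gamma> {p. fst p \<le> t \<and> t < snd p \<or> snd p \<le> t \<and> t < fst p}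
      = emeasure \<gamma> ({p. fst p \<le> t \<and> t < snd p} \<union> {p. snd p \<le> t \<and> t < fst p})"
    by (simp add: Collect_disj_eq)
  also have "\<dots> = ennreal (up_flux \<gamma> t) + ennreal (down_flux \<gamma> t)"
    by (subst plus_emeasure[symmetric]) (auto simp: up_flux_def down_flux_def emeasure_eq_measure)
  finally show ?thesis by (simp add: ennreal_plus up_flux_nonneg down_flux_nonneg)
qed

text \<open>The cost \<open>|y - x|\<close> of a pair is the length of the set of points it crosses.\<close>
lemma transport_cost_eq_flux:
  "transport_cost \<gamma> = (\<integral>\<^sup>+ t. ennreal (up_flux \<gamma> t + down_flux \<gamma> t) \<partial>lborel)"
proof -
  interpret pair_sigma_finite lborel \<gamma> ..
  let ?cross = "\<lambda>t p. indicator {p. fst p \<le> t \<and> t < snd p \<or> snd p \<le> t \<and> t < fst p} p :: ennreal"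
  have length: "(\<integral>\<^sup>+ t. ?cross t p \<partial>lborel) = ennreal \<bar>snd p - fst p\<bar>" for p
  proof -
    have "?cross t p = indicator ({fst p..<snd p} \<union> {snd p..<fst p}) t" for t
      by (auto split: split_indicator)
    then have "(\<integral>\<^sup>+ t. ?cross t p \<partial>lborel) = emeasure lborel ({fst p..<snd p} \<union> {snd p..<fst p})"
      by simp
    also have "\<dots> = ennreal \<bar>snd p - fst p\<bar>"
      by (cases "fst p \<le> snd p") auto
    finally show ?thesis .
  qed
  have "transport_cost \<gamma> = (\<integral>\<^sup>+ p. \<integral>\<^sup>+ t. ?cross t p \<partial>lborel \<partial>\<gamma>)"
    by (simp add: transport_cost_def length)
  also have "\<dots> = (\<integral>\<^sup>+ t. \<integral>\<^sup>+ p. ?cross t p \<partial>\<gamma> \<partial>lborel)"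
    by (rule Fubini') measurable
  also have "\<dots> = (\<integral>\<^sup>+ t. ennreal (up_flux \<gamma> t + down_flux \<gamma> t) \<partial>lborel)"
    by (simp add: emeasure_crossing)
  finally show ?thesis .
qed

lemma abs_cdf_gap_le_flux: "\<bar>cdf_gap \<mu> \<nu> t\<bar> \<le> up_flux \<gamma> t + down_flux \<gamma> t"
  using up_flux_nonneg[of \<gamma> t] down_flux_nonneg[of \<gamma> t] by (simp add: cdf_gap_eq_flux abs_if)

lemma nn_integral_cdf_gap_le_transport_cost:
  "(\<integral>\<^sup>+ t. ennreal \<bar>cdf_gap \<mu> \<nu> t\<bar> \<partial>lborel) \<le> transport_cost \<gamma>"
  unfolding transport_cost_eq_flux by (intro nn_integral_mono ennreal_leI abs_cdf_gap_le_flux)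

lemma transport_cost_eq_cdf_gap:
  assumes "one_way_flux \<gamma>"
  shows "transport_cost \<gamma> = (\<integral>\<^sup>+ t. ennreal \<bar>cdf_gap \<mu> \<nu> t\<bar> \<partial>lborel)"
  unfolding transport_cost_eq_flux
proof (intro nn_integral_cong arg_cong[where f = ennreal])
  fix t
  show "up_flux \<gamma> t + down_flux \<gamma> t = \<bar>cdf_gap \<mu> \<nu> t\<bar>"
    using assms up_flux_nonneg[of \<gamma> t] down_flux_nonneg[of \<gamma> t]
    by (cases "up_flux \<gamma> t = 0") (auto simp: one_way_flux_def cdf_gap_eq_flux)
qed

lemma AE_one_way_flux_if_transport_cost_le:
  assumes le: "transport_cost \<gamma> \<le> (\<integral>\<^sup>+ t. ennreal \<bar>cdf_gap \<mu> \<nu> t\<bar> \<partial>lborel)"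
    and finite: "(\<integral>\<^sup>+ t. ennreal \<bar>cdf_gap \<mu> \<nu> t\<bar> \<partial>lborel) \<noteq> \<infinity>"
  shows "AE t in lborel. up_flux \<gamma> t = 0 \<or> down_flux \<gamma> t = 0"
proof -
  let ?gap = "\<integral>\<^sup>+ t. ennreal \<bar>cdf_gap \<mu> \<nu> t\<bar> \<partial>lborel"
  define excess where "excess t = up_flux \<gamma> t + down_flux \<gamma> t - \<bar>cdf_gap \<mu> \<nu> t\<bar>" for t
  have "transport_cost \<gamma> = (\<integral>\<^sup>+ t. ennreal \<bar>cdf_gap \<mu> \<nu> t\<bar> + ennreal (excess t) \<partial>lborel)"
    unfolding transport_cost_eq_flux excess_def
    by (intro nn_integral_cong, subst ennreal_plus[symmetric]) (auto intro: abs_cdf_gap_le_flux)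
  also have "\<dots> = ?gap + (\<integral>\<^sup>+ t. ennreal (excess t) \<partial>lborel)"
    by (rule nn_integral_add) (auto simp: excess_def)
  finally have "?gap + (\<integral>\<^sup>+ t. ennreal (excess t) \<partial>lborel) \<le> ?gap + 0"
    using le by simp
  then have "(\<integral>\<^sup>+ t. ennreal (excess t) \<partial>lborel) = 0"
    using finite by (simp add: ennreal_add_left_cancel_le)
  then have "AE t in lborel. ennreal (excess t) = 0"
    by (subst nn_integral_0_iff_AE[symmetric]) (auto simp: excess_def)
  then show ?thesis
  proof eventually_elim
    case (elim t)
    then show ?case
      using up_flux_nonneg[of \<gamma> t] down_flux_nonneg[of \<gamma> t]
      by (auto simp: excess_def cdf_gap_eq_flux abs_if ennreal_eq_0_iff split: if_splits)
  qed
qed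

lemma up_flux_eq_0_iff: "up_flux \<gamma> t = 0 \<longleftrightarrow> (AE p in \<gamma>. \<not> (fst p \<le> t \<and> t < snd p))"
  using AE_iff_measurable[of "{p. fst p \<le> t \<and> t < snd p}" \<gamma>]
  by (simp add: up_flux_def emeasure_eq_measure)

lemma down_flux_eq_0_iff: "down_flux \<gamma> t = 0 \<longleftrightarrow> (AE p in \<gamma>. \<not> (snd p \<le> t \<and> t < fst p))"
  using AE_iff_measurable[of "{p. snd p \<le> t \<and> t < fst p}" \<gamma>]
  by (simp add: down_flux_def emeasure_eq_measure)

lemma AE_no_up_crossing:
  assumes "up_flux \<gamma> t = 0 \<or> down_flux \<gamma> t = 0" "cdf_gap \<mu> \<nu> t \<le> 0"
  shows "AE p in \<gamma>. \<not> (fst p \<le> t \<and> t < snd p)"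
proof -
  have "up_flux \<gamma> t = 0"
    using assms up_flux_nonneg[of \<gamma> t] down_flux_nonneg[of \<gamma> t] by (auto simp: cdf_gap_eq_flux)
  then show ?thesis by (simp only: up_flux_eq_0_iff)
qed

lemma AE_no_down_crossing:
  assumes "up_flux \<gamma> t = 0 \<or> down_flux \<gamma> t = 0" "cdf_gap \<mu> \<nu> t \<ge> 0"
  shows "AE p in \<gamma>. \<not> (snd p \<le> t \<and> t < fst p)"
proof -
  have "down_flux \<gamma> t = 0"
    using assms up_flux_nonneg[of \<gamma> t] down_flux_nonneg[of \<gamma> t] by (auto simp: cdf_gap_eq_flux)
  then show ?thesis by (simp only: down_flux_eq_0_iff)
qed

text \<open>By Fubini, almost every pair crosses only points of the right sign, up to a null set of
  points. If some \<open>t\<close> were crossed both ways, an upward and a downward pair of this kind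
  would together force an interval to the right of \<open>t\<close> to be null.\<close>
lemma one_way_flux_if_AE:
  assumes "AE t in lborel. up_flux \<gamma> t = 0 \<or> down_flux \<gamma> t = 0"
  shows "one_way_flux \<gamma>"
  unfolding one_way_flux_def
proof (intro allI, rule ccontr)
  interpret pair_sigma_finite lborel \<gamma> ..
  fix t
  assume "\<not> (up_flux \<gamma> t = 0 \<or> down_flux \<gamma> t = 0)"
  then have not_AE: "\<not> (AE p in \<gamma>. \<not> (fst p \<le> t \<and> t < snd p))"
    "\<not> (AE p in \<gamma>. \<not> (snd p \<le> t \<and> t < fst p))"
    by (simp_all add: up_flux_eq_0_iff down_flux_eq_0_iff)
  have "AE s in lborel. AE p in \<gamma>. cdf_gap \<mu> \<nu> s \<le> 0 \<longrightarrow> \<not> (fst p \<le> s \<and> s < snd p)"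
    using assms by eventually_elim (intro AE_impI AE_no_up_crossing)
  then have "AE p in \<gamma>. AE s in lborel. cdf_gap \<mu> \<nu> s \<le> 0 \<longrightarrow> \<not> (fst p \<le> s \<and> s < snd p)"
    by (subst (asm) AE_commute) measurable
  then obtain p where p: "fst p \<le> t" "t < snd p"
    and up: "AE s in lborel. cdf_gap \<mu> \<nu> s \<le> 0 \<longrightarrow> \<not> (fst p \<le> s \<and> s < snd p)"
    using AE_ex_witness[OF _ not_AE(1)] by blast
  have "AE s in lborel. AE p in \<gamma>. cdf_gap \<mu> \<nu> s \<ge> 0 \<longrightarrow> \<not> (snd p \<le> s \<and> s < fst p)"
    using assms by eventually_elim (intro AE_impI AE_no_down_crossing)
  then have "AE p in \<gamma>. AE s in lborel. cdf_gap \<mu> \<nu> s \<ge> 0 \<longrightarrow> \<not> (snd p \<le> s \<and> s < fst p)"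
    by (subst (asm) AE_commute) measurable
  then obtain q where q: "snd q \<le> t" "t < fst q"
    and down: "AE s in lborel. cdf_gap \<mu> \<nu> s \<ge> 0 \<longrightarrow> \<not> (snd q \<le> s \<and> s < fst q)"
    using AE_ex_witness[OF _ not_AE(2)] by blast
  let ?m = "min (snd p) (fst q)"
  have "AE s in lborel. s \<notin> {t<..<?m}"
    using up down by eventually_elim (use p q in auto)
  then have "emeasure lborel {t<..<?m} = 0"
    by (subst AE_iff_measurable[symmetric, where P = "\<lambda>s. s \<notin> {t<..<?m}"]) auto
  then show False using p q by simp
qed

lemma AE_fst_neq: "atomless \<mu> \<Longrightarrow> AE p in \<gamma>. fst p \<noteq> t"
  using AE_iff_measurable[of "{p. fst p = t}" \<gamma>] measure_fst[of "{t}"]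
  by (simp add: atomless_def emeasure_eq_measure M.emeasure_eq_measure)

lemma AE_snd_neq: "atomless \<nu> \<Longrightarrow> AE p in \<gamma>. snd p \<noteq> t"
  using AE_iff_measurable[of "{p. snd p = t}" \<gamma>] measure_snd[of "{t}"]
  by (simp add: atomless_def emeasure_eq_measure N.emeasure_eq_measure)

lemma one_way_flux_iff_AE_monotone:
  assumes "atomless \<mu>" "atomless \<nu>"
  shows "one_way_flux \<gamma> \<longleftrightarrow> (AE p in \<gamma>.
    (fst p < snd p \<longrightarrow> (\<forall>t\<in>{fst p..snd p}. cdf \<nu> t < cdf \<mu> t)) \<and>
    (snd p < fst p \<longrightarrow> (\<forall>t\<in>{snd p..fst p}. cdf \<mu> t < cdf \<nu> t)))"
proof
  assume one_way: "one_way_flux \<gamma>"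
  have cont: "continuous_on UNIV (cdf_gap \<mu> \<nu>)"
    using isCont_cdf_if_atomless borel_prob_fst borel_prob_snd assms
    by (intro continuous_at_imp_continuous_on ballI isCont_diff) auto
  have "AE p in \<gamma>. fst p < snd p \<longrightarrow> (\<forall>t\<in>{fst p..snd p}. 0 < cdf_gap \<mu> \<nu> t)"
    using one_way AE_no_up_crossing AE_snd_neq[OF assms(2)]
    by (intro AE_positive_between[OF cont]) (auto simp: one_way_flux_def)
  moreover have "AE p in \<gamma>. snd p < fst p \<longrightarrow> (\<forall>t\<in>{snd p..fst p}. 0 < - cdf_gap \<mu> \<nu> t)"
    using one_way AE_no_down_crossing AE_fst_neq[OF assms(1)]
    by (intro AE_positive_between[OF continuous_on_minus[OF cont]]) (auto simp: one_way_flux_def)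
  ultimately show "AE p in \<gamma>.
    (fst p < snd p \<longrightarrow> (\<forall>t\<in>{fst p..snd p}. cdf \<nu> t < cdf \<mu> t)) \<and>
    (snd p < fst p \<longrightarrow> (\<forall>t\<in>{snd p..fst p}. cdf \<mu> t < cdf \<nu> t))"
    by eventually_elim auto
next
  assume monotone: "AE p in \<gamma>.
    (fst p < snd p \<longrightarrow> (\<forall>t\<in>{fst p..snd p}. cdf \<nu> t < cdf \<mu> t)) \<and>
    (snd p < fst p \<longrightarrow> (\<forall>t\<in>{snd p..fst p}. cdf \<mu> t < cdf \<nu> t))"
  show "one_way_flux \<gamma>"
    unfolding one_way_flux_def
  proof
    fix t
    show "up_flux \<gamma> t = 0 \<or> down_flux \<gamma> t = 0"
    proof (cases "cdf_gap \<mu> \<nu> t \<le> 0")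
      case True
      have "AE p in \<gamma>. \<not> (fst p \<le> t \<and> t < snd p)"
        using monotone by eventually_elim (use True in force)
      then show ?thesis unfolding up_flux_eq_0_iff ..
    next
      case False
      have "AE p in \<gamma>. \<not> (snd p \<le> t \<and> t < fst p)"
        using monotone by eventually_elim (use False in force)
      then show ?thesis unfolding down_flux_eq_0_iff ..
    qed
  qed
qed

end

section \<open>The quantile coupling\<close>

definition quantile :: "real measure \<Rightarrow> real \<Rightarrow> real" where
  "quantile \<mu> \<omega> = Inf {x. \<omega> \<le> cdf \<mu> x}"

lemma prob_space_unit_interval: "prob_space (restrict_space lborel {0<..<1::real})"
  by (auto simp: emeasure_restrict_space space_restrict_space intro!: prob_spaceI)

lemma
  assumes "borel_prob \<mu>"
  shows measurable_quantile: "quantile \<mu> \<in> borel_measurable (restrict_space lborel {0<..<1})"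
    and distr_quantile: "distr (restrict_space lborel {0<..<1}) borel (quantile \<mu>) = \<mu>"
    and quantile_le_iff: "\<omega> \<in> {0<..<1} \<Longrightarrow> quantile \<mu> \<omega> \<le> t \<longleftrightarrow> \<omega> \<le> cdf \<mu> t"
proof -
  interpret cdf_distribution \<mu>
    using assms by (simp add: cdf_distribution_def real_distribution_if_borel_prob)
  have sets: "sets (restrict_space lborel {0<..<1::real}) = sets (restrict_space borel {0<..<1})"
    by (rule sets_restrict_space_cong) simp
  show "quantile \<mu> \<in> borel_measurable (restrict_space lborel {0<..<1})"
    unfolding quantile_def[abs_def] measurable_cong_sets[OF sets refl] by (rule measurable_CI)
  show "distr (restrict_space lborel {0<..<1}) borel (quantile \<mu>) = \<mu>"
    using distr_I_eq_M unfolding quantile_def[abs_def] .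
  show "\<omega> \<in> {0<..<1} \<Longrightarrow> quantile \<mu> \<omega> \<le> t \<longleftrightarrow> \<omega> \<le> cdf \<mu> t"
    using pseudoinverse[of \<omega> t] unfolding quantile_def by auto
qed

definition quantile_coupling :: "real measure \<Rightarrow> real measure \<Rightarrow> (real \<times> real) measure" where
  "quantile_coupling \<mu> \<nu> = distr (restrict_space lborel {0<..<1}) (borel \<Otimes>\<^sub>M borel)
     (\<lambda>\<omega>. (quantile \<mu> \<omega>, quantile \<nu> \<omega>))"

context
  fixes \<mu> \<nu> :: "real measure"
  assumes borel_prob: "borel_prob \<mu>" "borel_prob \<nu>"
begin

private lemma measurable_quantile_pair:
  "(\<lambda>\<omega>. (quantile \<mu> \<omega>, quantile \<nu> \<omega>)) \<in> restrict_space lborel {0<..<1} \<rightarrow>\<^sub>M borel \<Otimes>\<^sub>M borel"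
  using measurable_quantile[OF borel_prob(1)] measurable_quantile[OF borel_prob(2)]
  by (rule measurable_Pair)

lemma quantile_coupling_in_transport_plans: "quantile_coupling \<mu> \<nu> \<in> transport_plans \<mu> \<nu>"
  unfolding transport_plans_def quantile_coupling_def
  using prob_space.prob_space_distr[OF prob_space_unit_interval measurable_quantile_pair]
    distr_quantile[OF borel_prob(1)] distr_quantile[OF borel_prob(2)]
  by (simp add: distr_distr[OF _ measurable_quantile_pair] o_def)

lemma measure_quantile_coupling:
  assumes "A \<in> sets (borel \<Otimes>\<^sub>M borel)"
  shows "measure (quantile_coupling \<mu> \<nu>) A =
    measure (restrict_space lborel {0<..<1}) {\<omega>\<in>{0<..<1}. (quantile \<mu> \<omega>, quantile \<nu> \<omega>) \<in> A}"
proof -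
  have "(\<lambda>\<omega>. (quantile \<mu> \<omega>, quantile \<nu> \<omega>)) -` A \<inter> space (restrict_space lborel {0<..<1})
      = {\<omega>\<in>{0<..<1}. (quantile \<mu> \<omega>, quantile \<nu> \<omega>) \<in> A}"
    by (auto simp: space_restrict_space)
  then show ?thesis
    unfolding quantile_coupling_def by (simp only: measure_distr[OF measurable_quantile_pair assms])
qed

lemma one_way_flux_quantile_coupling: "one_way_flux (quantile_coupling \<mu> \<nu>)"
  unfolding one_way_flux_def
proof
  fix t
  let ?measure = "measure (restrict_space lborel {0<..<1::real})"
  have up: "up_flux (quantile_coupling \<mu> \<nu>) t = ?measure {\<omega>\<in>{0<..<1}. \<omega> \<le> cdf \<mu> t \<and> cdf \<nu> t < \<omega>}"
    unfolding up_flux_def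
    by (subst measure_quantile_coupling) (measurable, auto simp: quantile_le_iff[OF borel_prob(1)]
        quantile_le_iff[OF borel_prob(2)] not_le[symmetric] intro!: arg_cong[where f = ?measure])
  have down: "down_flux (quantile_coupling \<mu> \<nu>) t = ?measure {\<omega>\<in>{0<..<1}. \<omega> \<le> cdf \<nu> t \<and> cdf \<mu> t < \<omega>}"
    unfolding down_flux_def
    by (subst measure_quantile_coupling) (measurable, auto simp: quantile_le_iff[OF borel_prob(1)]
        quantile_le_iff[OF borel_prob(2)] not_le[symmetric] intro!: arg_cong[where f = ?measure])
  show "up_flux (quantile_coupling \<mu> \<nu>) t = 0 \<or> down_flux (quantile_coupling \<mu> \<nu>) t = 0"
  proof (cases "cdf \<mu> t \<le> cdf \<nu> t")
    case True
    then have "{\<omega>\<in>{0<..<1}. \<omega> \<le> cdf \<mu> t \<and> cdf \<nu> t < \<omega>} = {}" by auto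
    then show ?thesis unfolding up by (metis measure_empty)
  next
    case False
    then have "{\<omega>\<in>{0<..<1}. \<omega> \<le> cdf \<nu> t \<and> cdf \<mu> t < \<omega>} = {}" by auto
    then show ?thesis unfolding down by (metis measure_empty)
  qed
qed

end

section \<open>Optimality\<close>

lemma cdf_outside_compact_support:
  assumes "borel_prob \<rho>" "compactly_supported \<rho>"
  obtains R where "\<And>t. t < -R \<Longrightarrow> cdf \<rho> t = 0" "\<And>t. R \<le> t \<Longrightarrow> cdf \<rho> t = 1"
proof -
  interpret real_distribution \<rho> using assms(1) by (rule real_distribution_if_borel_prob)
  obtain K where K: "compact K" "emeasure \<rho> (UNIV - K) = 0"
    using assms(2) by (auto simp: compactly_supported_def)
  obtain R where R: "\<And>x. x \<in> K \<Longrightarrow> \<bar>x\<bar> \<le> R"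
    using compact_imp_bounded[OF K(1)] by (auto simp: bounded_iff)
  have "UNIV - K \<in> sets \<rho>"
    using assms(1) compact_imp_closed[OF K(1)] by (simp add: borel_prob_def borel_open open_Diff)
  then have null: "measure \<rho> A = 0" if "A \<subseteq> UNIV - K" for A
    using emeasure_mono[OF that \<open>UNIV - K \<in> sets \<rho>\<close>] K(2) by (simp add: measure_def)
  show ?thesis
  proof
    show "cdf \<rho> t = 0" if "t < -R" for t
      using null[of "{..t}"] R that by (force simp: cdf_def)
    show "cdf \<rho> t = 1" if "R \<le> t" for t
    proof -
      have "UNIV - {t<..} = {..t}" by auto
      then have "cdf \<rho> t = 1 - measure \<rho> {t<..}"
        using prob_compl[of "{t<..}"] by (simp add: cdf_def)
      then show ?thesis using null[of "{t<..}"] R that by force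
    qed
  qed
qed

lemma nn_integral_abs_cdf_gap_finite:
  assumes "borel_prob \<mu>" "borel_prob \<nu>" "compactly_supported \<mu>" "compactly_supported \<nu>"
  shows "(\<integral>\<^sup>+ t. ennreal \<bar>cdf_gap \<mu> \<nu> t\<bar> \<partial>lborel) \<noteq> \<infinity>"
proof -
  interpret M: real_distribution \<mu> using assms(1) by (rule real_distribution_if_borel_prob)
  interpret N: real_distribution \<nu> using assms(2) by (rule real_distribution_if_borel_prob)
  obtain R1 R2 where
    "\<And>t. t < -R1 \<Longrightarrow> cdf \<mu> t = 0" "\<And>t. R1 \<le> t \<Longrightarrow> cdf \<mu> t = 1"
    "\<And>t. t < -R2 \<Longrightarrow> cdf \<nu> t = 0" "\<And>t. R2 \<le> t \<Longrightarrow> cdf \<nu> t = 1"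
    using cdf_outside_compact_support assms by metis
  then have "ennreal \<bar>cdf_gap \<mu> \<nu> t\<bar> \<le> indicator {-max R1 R2..max R1 R2} t" for t
    using M.cdf_nonneg[of t] N.cdf_nonneg[of t] M.cdf_bounded_prob[of t] N.cdf_bounded_prob[of t]
    by (cases "t < - max R1 R2 \<or> max R1 R2 < t") (auto simp: indicator_def)
  then have "(\<integral>\<^sup>+ t. ennreal \<bar>cdf_gap \<mu> \<nu> t\<bar> \<partial>lborel) \<le> (\<integral>\<^sup>+ t. indicator {-max R1 R2..max R1 R2} t \<partial>lborel)"
    by (rule nn_integral_mono)
  also have "\<dots> < \<infinity>" by (simp add: emeasure_lborel_Icc_eq)
  finally show ?thesis by simp
qed

context coupling
begin

lemma optimal_plan_iff_one_way_flux:
  assumes finite: "(\<integral>\<^sup>+ t. ennreal \<bar>cdf_gap \<mu> \<nu> t\<bar> \<partial>lborel) \<noteq> \<infinity>"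
  shows "optimal_plan \<mu> \<nu> \<gamma> \<longleftrightarrow> one_way_flux \<gamma>"
proof
  assume "optimal_plan \<mu> \<nu> \<gamma>"
  interpret Q: coupling \<mu> \<nu> "quantile_coupling \<mu> \<nu>"
    by (simp add: coupling_def borel_prob_fst borel_prob_snd quantile_coupling_in_transport_plans)
  have "transport_cost \<gamma> \<le> transport_cost (quantile_coupling \<mu> \<nu>)"
    using \<open>optimal_plan \<mu> \<nu> \<gamma>\<close> Q.transport_plan by (simp add: optimal_plan_def)
  also have "\<dots> = (\<integral>\<^sup>+ t. ennreal \<bar>cdf_gap \<mu> \<nu> t\<bar> \<partial>lborel)"
    using borel_prob_fst borel_prob_snd
    by (intro Q.transport_cost_eq_cdf_gap one_way_flux_quantile_coupling)
  finally show "one_way_flux \<gamma>"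
    by (intro one_way_flux_if_AE AE_one_way_flux_if_transport_cost_le finite)
next
  assume "one_way_flux \<gamma>"
  have "transport_cost \<gamma> \<le> transport_cost \<gamma>'" if "\<gamma>' \<in> transport_plans \<mu> \<nu>" for \<gamma>'
  proof -
    interpret \<gamma>': coupling \<mu> \<nu> \<gamma>'
      using borel_prob_fst borel_prob_snd that by unfold_locales
    show ?thesis
      using \<gamma>'.nn_integral_cdf_gap_le_transport_cost
      by (simp add: transport_cost_eq_cdf_gap[OF \<open>one_way_flux \<gamma>\<close>])
  qed
  then show "optimal_plan \<mu> \<nu> \<gamma>"
    using transport_plan by (simp add: optimal_plan_def)
qed

end

theorem mainTheorem4:
  fixes \<mu> \<nu> :: "real measure" and \<gamma> :: "(real \<times> real) measure"
  assumes "borel_prob \<mu>" and "borel_prob \<nu>"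
    and "atomless \<mu>" and "atomless \<nu>"
    and "compactly_supported \<mu>" and "compactly_supported \<nu>"
    and "\<gamma> \<in> transport_plans \<mu> \<nu>"
  shows "optimal_plan \<mu> \<nu> \<gamma> \<longleftrightarrow>
    (AE p in \<gamma>.
       (fst p \<in> eqset \<mu> \<nu> \<longrightarrow> snd p = fst p) \<and>
       (fst p \<in> posset \<mu> \<nu> \<longrightarrow> snd p \<ge> fst p \<and>
          snd p \<in> connected_component_set (posset \<mu> \<nu>) (fst p)) \<and>
       (fst p \<in> negset \<mu> \<nu> \<longrightarrow> snd p \<le> fst p \<and>
          snd p \<in> connected_component_set (negset \<mu> \<nu>) (fst p)))"
    (is "_ \<longleftrightarrow> ?component_condition")
proof -
  interpret coupling \<mu> \<nu> \<gamma> using assms by unfold_locales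
  have "optimal_plan \<mu> \<nu> \<gamma> \<longleftrightarrow> one_way_flux \<gamma>"
    using assms by (intro optimal_plan_iff_one_way_flux nn_integral_abs_cdf_gap_finite)
  also have "\<dots> \<longleftrightarrow> (AE p in \<gamma>.
      (fst p < snd p \<longrightarrow> (\<forall>t\<in>{fst p..snd p}. cdf \<nu> t < cdf \<mu> t)) \<and>
      (snd p < fst p \<longrightarrow> (\<forall>t\<in>{snd p..fst p}. cdf \<mu> t < cdf \<nu> t)))"
    using assms by (intro one_way_flux_iff_AE_monotone)
  also have "\<dots> \<longleftrightarrow> ?component_condition"
    unfolding eqset_def posset_def negset_def displacement_within_component_iff ..
  finally show ?thesis .
qed

end
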